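(* Let $A$ be a finite-dimensional Hilbert space and let $\{\Theta_\rho\}_{\rho\in\mathfrak{S}(A)}$ be a family of linear maps $\Theta_\rho:\mathfrak{B}(A)\to\mathfrak{B}(A)$ such that: $\Theta_\rho$ depends linearly on $\rho$; $\Theta_\rho(M)=\rho M$ whenever $M\in\mathfrak{B}(A)$ satisfies $[\rho,M]=0$; and each $\Theta_\rho$ is self-adjoint with respect to the Hilbert–Schmidt inner product $\langle X,Y\rangle=\mathrm{Tr}[X^\dagger Y]$. Then there is a real number $\mu$ such that $$\Theta_\rho(M)=\mu\,\rho M+(1-\mu)\,M\rho\quad\text{for all }\rho\in\mathfrak{S}(A),\ M\in\mathfrak{B}(A).$$ If moreover each $\Theta_\rho$ is positive semidefinite with respect to the Hilbert–Schmidt inner product (i.e. $\mathrm{Tr}[M^\dagger\Theta_\rho(M)]\ge0$ for all $M$), then $0\le\mu\le1$.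
   Context: $\mathfrak{B}(A)$ denotes the linear operators on $A$ and $\mathfrak{S}(A)$ the density operators on $A$; $[X,Y]=XY-YX$. Linear dependence on $\rho$ means $\rho\mapsto\Theta_\rho$ is (the restriction of) a linear map from $\mathfrak{B}(A)$ into the linear maps on $\mathfrak{B}(A)$. *)

theory Defs
  imports "HOL-Analysis.Analysis" "HOL-Library.Complex_Order"
begin

text \<open>Operators on the finite-dimensional Hilbert space A = complex^'n, represented
  as complex 'n x 'n matrices.\<close>

type_synonym 'n op = "complex^'n^'n"

definition mtrace :: "'n::finite op \<Rightarrow> complex" where
  "mtrace X = (\<Sum>i\<in>UNIV. X $ i $ i)"

definition dagger :: "'n::finite op \<Rightarrow> 'n op" where
  "dagger X = (\<chi> i j. cnj (X $ j $ i))"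

definition msmult :: "complex \<Rightarrow> 'n::finite op \<Rightarrow> 'n op" where
  "msmult c X = (\<chi> i j. c * X $ i $ j)"

definition hs_inner :: "'n::finite op \<Rightarrow> 'n op \<Rightarrow> complex" where
  "hs_inner X Y = mtrace (dagger X ** Y)"

definition op_linear :: "('n::finite op \<Rightarrow> 'm::finite op) \<Rightarrow> bool" where
  "op_linear f \<longleftrightarrow> (\<forall>X Y. f (X + Y) = f X + f Y) \<and> (\<forall>c X. f (msmult c X) = msmult c (f X))"

text \<open>Positive semidefinite: the quadratic form v^* X v is real and nonnegative for all v
  (ordering on complex numbers from Complex_Order).\<close>
definition psd :: "'n::finite op \<Rightarrow> bool" where
  "psd X \<longleftrightarrow> (\<forall>v::complex^'n. 0 \<le> (\<Sum>i\<in>UNIV. cnj (v $ i) * (X *v v) $ i))"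

definition density :: "'n::finite op \<Rightarrow> bool" where
  "density \<rho> \<longleftrightarrow> psd \<rho> \<and> mtrace \<rho> = 1"

end

theory Submission
  imports Defs
begin

text \<open>
  Extend \<open>\<Theta>\<close> linearly to all operators, which is possible because density operators span
  all operators, and consider the defect \<open>f X Y = \<Theta>\<^sub>X Y - X Y\<close>. It is bilinear,
  satisfies \<open>\<langle>Z, f X Y\<rangle> = \<langle>f X\<^sup>\<dagger> Z, Y\<rangle>\<close>, and vanishes when \<open>X\<close> is Hermitian and commutes
  with \<open>Y\<close>, since such an \<open>X\<close> is a combination of the identity and a density operator commuting
  with \<open>Y\<close>. Polarizing \<open>f H (H H) = 0\<close> gives
  \<open>f X (Y Z + Z Y) + f Y (X Z + Z X) + f Z (X Y + Y X) = 0\<close>, and \<open>Y = 1\<close> makes \<open>f\<close>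
  antisymmetric. On matrix units these relations determine \<open>f\<close> by the numbers
  \<open>f(E\<^sub>a\<^sub>a, E\<^sub>a\<^sub>b)\<^sub>a\<^sub>b\<close> for \<open>a \<noteq> b\<close>, which are real and do not depend on \<open>a, b\<close>.
  With \<open>c\<close> their common value, \<open>f X Y = c [X, Y]\<close>, i.e. \<open>\<Theta>\<^sub>\<rho> M = (1 + c) \<rho> M - c M \<rho>\<close>, and
  positivity at \<open>\<rho> = E\<^sub>a\<^sub>a\<close> with \<open>M = E\<^sub>a\<^sub>b\<close> and \<open>M = E\<^sub>b\<^sub>a\<close> gives \<open>0 \<le> 1 + c \<le> 1\<close>.
\<close>

section \<open>Matrix units and the Hilbert--Schmidt inner product\<close>

definition mat_unit :: "'n::finite \<Rightarrow> 'n \<Rightarrow> 'n op" where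
  "mat_unit a b = (\<chi> i j. if i = a \<and> j = b then 1 else 0)"

definition hermitian :: "'n::finite op \<Rightarrow> bool" where
  "hermitian X \<longleftrightarrow> dagger X = X"

lemma msmult_component [simp]: "msmult c X $ i $ j = c * X $ i $ j"
  by (simp add: msmult_def)

lemma dagger_component [simp]: "dagger X $ i $ j = cnj (X $ j $ i)"
  by (simp add: dagger_def)

lemma mat_unit_component [simp]: "mat_unit a b $ i $ j = (if i = a \<and> j = b then 1 else 0)"
  by (simp add: mat_unit_def)

lemma matrix_mult_component: "((X::'n::finite op) ** Y) $ i $ j = (\<Sum>k\<in>UNIV. X $ i $ k * Y $ k $ j)"
  by (simp add: matrix_matrix_mult_def)

lemma msmult_add_right: "msmult c (X + Y) = msmult c X + msmult c Y"
  by (simp add: vec_eq_iff distrib_left)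

lemma msmult_diff_right: "msmult c (X - Y) = msmult c X - msmult c Y"
  by (simp add: vec_eq_iff right_diff_distrib)

lemma msmult_msmult [simp]: "msmult c (msmult d X) = msmult (c * d) X"
  by (simp add: vec_eq_iff)

lemma msmult_one [simp]: "msmult 1 X = X"
  by (simp add: vec_eq_iff)

lemma msmult_zero_left [simp]: "msmult 0 X = 0"
  by (simp add: vec_eq_iff)

lemma msmult_zero_right [simp]: "msmult c 0 = 0"
  by (simp add: vec_eq_iff)

lemma msmult_minus_one: "msmult (- 1) X = - X"
  by (simp add: vec_eq_iff)

(* For use with simp only: the simplifier would rewrite X + X to 2 * X, an entrywise product
   in the ring structure of vec. *)
lemma op_double_eq_0_iff: "X + X = (0::'n::finite op) \<longleftrightarrow> X = 0"
  by (simp add: vec_eq_iff flip: mult_2)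

lemma matrix_msmult_left: "msmult c X ** (Y::'n::finite op) = msmult c (X ** Y)"
  by (simp add: vec_eq_iff matrix_mult_component sum_distrib_left mult.assoc)

lemma matrix_msmult_right: "(X::'n::finite op) ** msmult c Y = msmult c (X ** Y)"
  by (simp add: vec_eq_iff matrix_mult_component sum_distrib_left mult.left_commute)

lemma matrix_add_rdistrib: "((X::'n::finite op) + Y) ** Z = X ** Z + Y ** Z"
  by (simp add: vec_eq_iff matrix_mult_component distrib_right sum.distrib)

lemma matrix_diff_ldistrib: "(Z::'n::finite op) ** (X - Y) = Z ** X - Z ** Y"
  by (simp add: vec_eq_iff matrix_mult_component right_diff_distrib sum_subtractf)

lemma matrix_diff_rdistrib: "((X::'n::finite op) - Y) ** Z = X ** Z - Y ** Z"
  by (simp add: vec_eq_iff matrix_mult_component left_diff_distrib sum_subtractf)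

lemma mat_unit_mult: "mat_unit a b ** mat_unit c d = (if b = c then mat_unit a d else (0::'n::finite op))"
proof -
  have "(\<Sum>k\<in>UNIV. (if i = a \<and> k = b then 1 else 0) * (if k = c \<and> j = d then 1 else (0::complex)))
      = (\<Sum>k\<in>UNIV. if k = b then (if b = c \<and> i = a \<and> j = d then 1 else 0) else 0)" for i j
    by (rule sum.cong) auto
  then show ?thesis
    by (simp add: vec_eq_iff matrix_mult_component)
qed

lemma dagger_mat_unit [simp]: "dagger (mat_unit a b) = mat_unit b a"
  by (auto simp: vec_eq_iff)

lemma dagger_dagger [simp]: "dagger (dagger X) = X"
  by (simp add: vec_eq_iff)

lemma dagger_add: "dagger (X + Y) = dagger X + dagger Y"
  by (simp add: vec_eq_iff)

lemma dagger_msmult: "dagger (msmult c X) = msmult (cnj c) (dagger X)"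
  by (simp add: vec_eq_iff)

lemma dagger_mult: "dagger ((X::'n::finite op) ** Y) = dagger Y ** dagger X"
  by (simp add: vec_eq_iff matrix_mult_component mult.commute)

lemma hermitian_mat_unit_diag: "hermitian (mat_unit a a)"
  by (simp add: hermitian_def)

lemma hermitian_mat1: "hermitian (mat 1)"
  by (simp add: hermitian_def vec_eq_iff mat_def)

lemma hermitian_add: "hermitian X \<Longrightarrow> hermitian Y \<Longrightarrow> hermitian (X + Y)"
  by (simp add: hermitian_def vec_eq_iff)

lemma hermitian_diff: "hermitian X \<Longrightarrow> hermitian Y \<Longrightarrow> hermitian (X - Y)"
  by (simp add: hermitian_def vec_eq_iff)

lemma hs_inner_sum: "hs_inner X Y = (\<Sum>i\<in>UNIV. \<Sum>j\<in>UNIV. cnj (X $ i $ j) * Y $ i $ j)"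
  unfolding hs_inner_def mtrace_def by (simp add: matrix_mult_component) (rule sum.swap)

lemma hs_inner_mat_unit_left [simp]: "hs_inner (mat_unit p q) Y = Y $ p $ q"
proof -
  have "cnj (mat_unit p q $ i $ j) * Y $ i $ j = (if j = q then if i = p then Y $ p $ q else 0 else 0)" for i j
    by auto
  then show ?thesis
    unfolding hs_inner_sum by (simp add: sum.swap[of _ UNIV UNIV])
qed

lemma cnj_hs_inner: "cnj (hs_inner X Y) = hs_inner Y X"
  by (simp add: hs_inner_sum mult.commute)

lemma hs_inner_add_left: "hs_inner (X + Y) Z = hs_inner X Z + hs_inner Y Z"
  by (simp add: hs_inner_sum distrib_right sum.distrib)

lemma hs_inner_add_right: "hs_inner Z (X + Y) = hs_inner Z X + hs_inner Z Y"
  by (simp add: hs_inner_sum distrib_left sum.distrib)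

lemma hs_inner_diff_left: "hs_inner (X - Y) Z = hs_inner X Z - hs_inner Y Z"
  by (simp add: hs_inner_sum left_diff_distrib sum_subtractf)

lemma hs_inner_diff_right: "hs_inner Z (X - Y) = hs_inner Z X - hs_inner Z Y"
  by (simp add: hs_inner_sum right_diff_distrib sum_subtractf)

lemma hs_inner_msmult_left: "hs_inner (msmult c X) Z = cnj c * hs_inner X Z"
  by (simp add: hs_inner_sum sum_distrib_left mult.assoc)

lemma hs_inner_msmult_right: "hs_inner Z (msmult c X) = c * hs_inner Z X"
  by (simp add: hs_inner_sum sum_distrib_left mult.left_commute)

lemma hs_inner_zero_left [simp]: "hs_inner 0 Y = 0"
  by (simp add: hs_inner_sum)

lemma hs_inner_minus_left: "hs_inner (- X) Y = - hs_inner X Y"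
  by (simp add: hs_inner_sum sum_negf)

lemma hs_inner_msmult_mat_unit [simp]: "hs_inner (msmult c (mat_unit p q)) (mat_unit p q) = cnj c"
  by (simp add: hs_inner_msmult_left)

lemma hs_inner_mult_left: "hs_inner Z ((A::'n::finite op) ** Y) = hs_inner (dagger A ** Z) Y"
  unfolding hs_inner_def by (simp add: dagger_mult matrix_mul_assoc)

lemma hs_inner_mult_right: "hs_inner Z ((Y::'n::finite op) ** A) = hs_inner (Z ** dagger A) Y"
proof -
  have "hs_inner Z (Y ** A) = (\<Sum>i\<in>UNIV. \<Sum>j\<in>UNIV. \<Sum>k\<in>UNIV. cnj (Z $ i $ j) * Y $ i $ k * A $ k $ j)"
    by (simp add: hs_inner_sum matrix_mult_component sum_distrib_left mult.assoc)
  also have "\<dots> = (\<Sum>i\<in>UNIV. \<Sum>k\<in>UNIV. \<Sum>j\<in>UNIV. cnj (Z $ i $ j) * Y $ i $ k * A $ k $ j)"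
    by (rule sum.cong[OF refl], rule sum.swap)
  also have "\<dots> = hs_inner (Z ** dagger A) Y"
    by (simp add: hs_inner_sum matrix_mult_component sum_distrib_left mult_ac)
  finally show ?thesis .
qed

lemma op_eq_sum_mat_unit: "X = (\<Sum>(a, b)\<in>UNIV. msmult (X $ a $ b) (mat_unit a b))"
proof -
  have "X $ fst x $ snd x * mat_unit (fst x) (snd x) $ i $ j = (if x = (i, j) then X $ i $ j else 0)" for x i j
    by auto
  then show ?thesis
    by (simp add: vec_eq_iff sum_component case_prod_beta)
qed

lemma op_induct_mat_unit [case_names zero add msmult mat_unit]:
  assumes "Q 0" and "\<And>X Y. Q X \<Longrightarrow> Q Y \<Longrightarrow> Q (X + Y)"
    and "\<And>c X. Q X \<Longrightarrow> Q (msmult c X)" and "\<And>a b. Q (mat_unit a b)"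
  shows "Q (X::'n::finite op)"
proof -
  have "Q (\<Sum>(a, b)\<in>S. msmult (X $ a $ b) (mat_unit a b))" if "finite S" for S :: "('n \<times> 'n) set"
    using that by induction (auto intro: assms)
  then show ?thesis
    by (subst op_eq_sum_mat_unit) simp
qed

section \<open>Density operators span all operators\<close>

definition qform :: "'n::finite op \<Rightarrow> complex^'n \<Rightarrow> complex" where
  "qform X v = (\<Sum>i\<in>UNIV. cnj (v $ i) * (X *v v) $ i)"

lemma psd_iff_qform: "psd X \<longleftrightarrow> (\<forall>v. 0 \<le> qform X v)"
  by (simp add: psd_def qform_def)

lemma qform_sum: "qform X v = (\<Sum>i\<in>UNIV. \<Sum>j\<in>UNIV. cnj (v $ i) * X $ i $ j * v $ j)"
  by (simp add: qform_def matrix_vector_mult_def sum_distrib_left mult.assoc)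

lemma qform_axis_axis:
  "qform X (axis i a + axis j b)
     = cnj a * a * X $ i $ i + cnj a * b * X $ i $ j + cnj b * a * X $ j $ i + cnj b * b * X $ j $ j"
proof -
  let ?v = "axis i a + axis j b"
  have mv: "(X *v ?v) $ k = X $ k $ i * a + X $ k $ j * b" for k
    by (simp add: matrix_vector_mult_def axis_def distrib_left sum.distrib if_distrib[of "\<lambda>x. _ * x"] cong: if_cong)
  have cv: "cnj (?v $ k) * w = (if k = i then cnj a * w else 0) + (if k = j then cnj b * w else 0)" for k w
    by (simp add: axis_def distrib_right)
  have "qform X ?v = (\<Sum>k\<in>UNIV. (if k = i then cnj a * (X $ k $ i * a + X $ k $ j * b) else 0)
                                 + (if k = j then cnj b * (X $ k $ i * a + X $ k $ j * b) else 0))"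
    unfolding qform_def mv cv ..
  then show ?thesis
    by (simp add: sum.distrib algebra_simps)
qed

lemma qform_axis: "qform X (axis i a) = cnj a * a * X $ i $ i"
proof -
  have "axis i (0::complex) = 0"
    by (simp add: vec_eq_iff axis_def)
  then show ?thesis
    using qform_axis_axis[of X i a i 0] by (simp del: axis_eq_0_iff)
qed

lemma qform_add: "qform (X + Y) v = qform X v + qform Y v"
  by (simp add: qform_sum distrib_left distrib_right sum.distrib)

lemma qform_msmult: "qform (msmult c X) v = c * qform X v"
  by (simp add: qform_sum sum_distrib_left mult_ac)

lemma qform_mat1: "qform (mat 1) v = of_real ((norm v)\<^sup>2)"
proof -
  have "qform (mat 1) v = (\<Sum>i\<in>UNIV. of_real ((cmod (v $ i))\<^sup>2))"
    by (simp add: qform_def complex_norm_square mult.commute del: of_real_power)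
  also have "\<dots> = of_real ((norm v)\<^sup>2)"
    by (simp add: norm_vec_def L2_set_def sum_nonneg del: of_real_power)
  finally show ?thesis .
qed

lemma cnj_qform: "cnj (qform X v) = qform (dagger X) v"
  by (simp add: qform_sum mult_ac) (rule sum.swap)

lemma norm_qform_le: "\<exists>K. \<forall>v. cmod (qform X v) \<le> K * (norm v)\<^sup>2"
proof -
  obtain K where K: "\<And>v. norm (X *v v) \<le> norm v * K"
    using bounded_linear.pos_bounded[OF matrix_vector_mul_bounded_linear[of X]] by blast
  have "cmod (qform X v) \<le> K * (norm v)\<^sup>2" for v
  proof -
    have "cmod (qform X v) \<le> (\<Sum>i\<in>UNIV. \<bar>cmod (v $ i)\<bar> * \<bar>cmod ((X *v v) $ i)\<bar>)"
      unfolding qform_def by (rule order_trans[OF norm_sum]) (simp add: norm_mult)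
    also have "\<dots> \<le> norm v * norm (X *v v)"
      unfolding norm_vec_def by (rule L2_set_mult_ineq)
    also have "\<dots> \<le> norm v * (norm v * K)"
      by (simp add: K mult_left_mono)
    finally show ?thesis
      by (simp add: power2_eq_square mult_ac)
  qed
  then show ?thesis by blast
qed

lemma psd_imp_hermitian:
  assumes "psd X"
  shows "hermitian X"
proof -
  have real: "Im (qform X v) = 0" for v
    using assms by (simp add: psd_iff_qform less_eq_complex_def)
  have "cnj (X $ j $ i) = X $ i $ j" for i j
  proof -
    have "Im (X $ i $ i) = 0" "Im (X $ j $ j) = 0"
      using real[of "axis i 1"] real[of "axis j 1"] by (simp_all add: qform_axis)
    moreover have "Im (X $ i $ i) + Im (X $ i $ j) + Im (X $ j $ i) + Im (X $ j $ j) = 0"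
      using real[of "axis i 1 + axis j 1"] unfolding qform_axis_axis by simp
    moreover have "Im (X $ i $ i) + Re (X $ i $ j) - Re (X $ j $ i) + Im (X $ j $ j) = 0"
      using real[of "axis i 1 + axis j \<i>"] unfolding qform_axis_axis by simp
    ultimately show ?thesis
      by (simp add: complex_eq_iff)
  qed
  then show ?thesis
    by (simp add: hermitian_def vec_eq_iff)
qed

lemma hermitian_shift_dominates_identity:
  assumes "hermitian H"
  shows "\<exists>t::real. \<forall>v. qform (mat 1) v \<le> qform (H + msmult (of_real t) (mat 1)) v"
proof -
  obtain K where K: "\<And>v. cmod (qform H v) \<le> K * (norm v)\<^sup>2"
    using norm_qform_le by blast
  have "qform (mat 1) v \<le> qform (H + msmult (of_real (K + 1)) (mat 1)) v" for v
  proof -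
    have "Im (qform H v) = 0"
      using cnj_qform[of H v] assms by (simp add: hermitian_def complex_eq_iff)
    moreover have "- (K * (norm v)\<^sup>2) \<le> Re (qform H v)"
      using K[of v] abs_Re_le_cmod[of "qform H v"] by linarith
    ultimately show ?thesis
      by (simp add: qform_add qform_msmult qform_mat1 less_eq_complex_def algebra_simps)
  qed
  then show ?thesis by blast
qed

lemma mtrace_msmult: "mtrace (msmult c X) = c * mtrace X"
  by (simp add: mtrace_def sum_distrib_left)

definition maximally_mixed :: "'n::finite op" where
  "maximally_mixed = msmult (1 / of_nat CARD('n)) (mat 1)"

lemma mat1_eq_msmult_maximally_mixed: "mat 1 = msmult (of_nat CARD('n)) (maximally_mixed :: 'n::finite op)"
  by (simp add: maximally_mixed_def)

lemma maximally_mixed_commute: "maximally_mixed ** (M::'n::finite op) = M ** maximally_mixed"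
  by (simp add: maximally_mixed_def matrix_msmult_left matrix_msmult_right)

lemma density_maximally_mixed: "density (maximally_mixed :: 'n::finite op)"
proof -
  have "qform (maximally_mixed :: 'n op) v = of_real ((norm v)\<^sup>2 / CARD('n))" for v
    by (simp add: maximally_mixed_def qform_msmult qform_mat1)
  then have "0 \<le> qform (maximally_mixed :: 'n op) v" for v
    by (simp add: less_eq_complex_def)
  moreover have "mtrace (maximally_mixed :: 'n op) = 1"
    by (simp add: maximally_mixed_def mtrace_msmult mtrace_def mat_def)
  ultimately show ?thesis
    by (simp add: density_def psd_iff_qform)
qed

lemma density_mat_unit: "density (mat_unit a a)"
proof -
  have "qform (mat_unit a a) v = cnj (v $ a) * v $ a" for v
  proof -
    have "cnj (v $ i) * mat_unit a a $ i $ j * v $ j = (if j = a then if i = a then cnj (v $ a) * v $ a else 0 else 0)" for i j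
      by simp
    then show ?thesis
      unfolding qform_sum by (simp add: sum.swap[of _ UNIV UNIV])
  qed
  then show ?thesis
    by (simp add: density_def psd_iff_qform mtrace_def less_eq_complex_def)
qed

lemma hermitian_decomposition:
  fixes H :: "'n::finite op"
  assumes "hermitian H"
  obtains \<rho> a b where "density \<rho>" "a \<noteq> 0" "H = msmult a \<rho> + msmult b (mat 1)"
proof -
  obtain t :: real where dom: "\<And>v. qform (mat 1) v \<le> qform (H + msmult (of_real t) (mat 1)) v"
    using hermitian_shift_dominates_identity[OF assms] by blast
  define K where "K = H + msmult (of_real t) (mat 1)"
  have "1 \<le> K $ i $ i" for i
    using dom[of "axis i 1"] by (simp add: K_def qform_axis mat_def)
  then have "of_nat CARD('n) \<le> mtrace K"
    using sum_mono[of UNIV "\<lambda>_. 1" "\<lambda>i. K $ i $ i"] by (simp add: mtrace_def)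
  then have "Im (mtrace K) = 0" and card_le: "real CARD('n) \<le> Re (mtrace K)"
    by (simp_all add: less_eq_complex_def)
  define \<tau> where "\<tau> = Re (mtrace K)"
  have \<tau>: "mtrace K = of_real \<tau>" "0 < \<tau>"
  proof -
    show "mtrace K = of_real \<tau>"
      using \<open>Im (mtrace K) = 0\<close> by (simp add: complex_eq_iff \<tau>_def)
    show "0 < \<tau>"
      using card_le unfolding \<tau>_def by (rule order_less_le_trans[rotated]) simp
  qed
  define \<rho> where "\<rho> = msmult (of_real (1 / \<tau>)) K"
  have "0 \<le> qform \<rho> v" for v
  proof -
    have "0 \<le> qform (mat 1) v"
      by (simp add: qform_mat1 less_eq_complex_def)
    then have "0 \<le> qform K v"
      using dom[of v] unfolding K_def by (rule order_trans)
    moreover have "0 \<le> (of_real (1 / \<tau>) :: complex)"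
      using \<tau> by (simp add: less_eq_complex_def)
    ultimately show ?thesis
      unfolding \<rho>_def qform_msmult by (rule mult_nonneg_nonneg[rotated])
  qed
  moreover have "mtrace \<rho> = 1"
    using \<tau> by (simp add: \<rho>_def mtrace_msmult)
  ultimately have "density \<rho>"
    by (simp add: density_def psd_iff_qform)
  moreover have "(of_real \<tau> :: complex) \<noteq> 0"
    using \<tau> by simp
  moreover have "H = msmult (of_real \<tau>) \<rho> + msmult (- of_real t) (mat 1)"
    using \<tau> by (simp add: \<rho>_def K_def vec_eq_iff)
  ultimately show thesis
    by (rule that)
qed

lemma hermitian_span_induct [case_names add msmult hermitian]:
  assumes "\<And>X Y. Q X \<Longrightarrow> Q Y \<Longrightarrow> Q (X + Y)"
    and "\<And>c X. Q X \<Longrightarrow> Q (msmult c X)"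
    and "\<And>H. hermitian H \<Longrightarrow> Q H"
  shows "Q X"
proof -
  have "hermitian (msmult (1/2) (X + dagger X))" "hermitian (msmult (- \<i>/2) (X - dagger X))"
    by (simp_all add: hermitian_def vec_eq_iff algebra_simps)
  moreover have "X = msmult (1/2) (X + dagger X) + msmult \<i> (msmult (- \<i>/2) (X - dagger X))"
    by (simp add: vec_eq_iff algebra_simps)
  ultimately show ?thesis
    using assms by metis
qed

lemma density_span_induct [case_names add msmult density]:
  assumes add: "\<And>X Y. Q X \<Longrightarrow> Q Y \<Longrightarrow> Q (X + Y)"
    and msmult: "\<And>c X. Q X \<Longrightarrow> Q (msmult c X)"
    and density: "\<And>\<rho>. density \<rho> \<Longrightarrow> Q \<rho>"
  shows "Q (X::'n::finite op)"
proof (induction X rule: hermitian_span_induct)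
  case (hermitian H)
  then obtain \<rho> a b where "density \<rho>" "H = msmult a \<rho> + msmult b (mat 1)"
    by (rule hermitian_decomposition)
  then show ?case
    using add msmult density density_maximally_mixed mat1_eq_msmult_maximally_mixed by metis
qed (use add msmult in auto)

section \<open>Bilinear maps vanishing on commuting Hermitian pairs\<close>

definition unit_coeff :: "('n::finite op \<Rightarrow> 'n op \<Rightarrow> 'n op) \<Rightarrow> 'n \<Rightarrow> 'n \<Rightarrow> complex" where
  "unit_coeff f a b = f (mat_unit a a) (mat_unit a b) $ a $ b"

locale commutator_like =
  fixes f :: "'n::finite op \<Rightarrow> 'n op \<Rightarrow> 'n op"
  assumes linear_left: "op_linear (\<lambda>X. f X Y)"
    and linear_right: "op_linear (f X)"
    and vanishes_on_commutant: "hermitian H \<Longrightarrow> H ** Y = Y ** H \<Longrightarrow> f H Y = 0"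
    and adjoint: "hs_inner Z (f X Y) = hs_inner (f (dagger X) Z) Y"
begin

lemma add_left: "f (X + X') Y = f X Y + f X' Y"
  using linear_left by (simp add: op_linear_def)

lemma add_right: "f X (Y + Y') = f X Y + f X Y'"
  using linear_right by (simp add: op_linear_def)

lemma msmult_left: "f (msmult c X) Y = msmult c (f X Y)"
  using linear_left by (simp add: op_linear_def)

lemma msmult_right: "f X (msmult c Y) = msmult c (f X Y)"
  using linear_right by (simp add: op_linear_def)

lemma zero_left [simp]: "f 0 Y = 0"
  using msmult_left[of 0 0 Y] by simp

lemma zero_right [simp]: "f X 0 = 0"
  using msmult_right[of X 0 0] by simp

lemma minus_left: "f (- X) Y = - f X Y"
  using msmult_left[of "- 1" X Y] by (simp add: msmult_minus_one)

lemma minus_right: "f X (- Y) = - f X Y"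
  using msmult_right[of X "- 1" Y] by (simp add: msmult_minus_one)

lemma diff_left: "f (X - X') Y = f X Y - f X' Y"
  using add_left[of X "- X'" Y] by (simp add: minus_left)

lemma diff_right: "f X (Y - Y') = f X Y - f X Y'"
  using add_right[of X Y "- Y'"] by (simp add: minus_right)

lemma identity_left [simp]: "f (mat 1) Y = 0"
  by (rule vanishes_on_commutant) (simp_all add: hermitian_mat1)

lemma hermitian_square: "hermitian H \<Longrightarrow> f H (H ** H) = 0"
  by (rule vanishes_on_commutant) (simp_all add: matrix_mul_assoc)

lemma hermitian_polarized_square:
  assumes "hermitian H" "hermitian K"
  shows "f H (H ** K + K ** H) + f K (H ** H) = 0"
proof -
  let ?A = "H ** H" and ?B = "H ** K + K ** H" and ?C = "K ** K"
  have "(H + K) ** (H + K) = ?A + ?B + ?C"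
    by (simp add: matrix_add_ldistrib matrix_add_rdistrib add_ac)
  then have plus: "f (H + K) (?A + ?B + ?C) = 0"
    using hermitian_square[OF hermitian_add[OF assms]] by simp
  have "(H - K) ** (H - K) = ?A - ?B + ?C"
    by (simp add: matrix_diff_ldistrib matrix_diff_rdistrib algebra_simps)
  then have minus: "f (H - K) (?A - ?B + ?C) = 0"
    using hermitian_square[OF hermitian_diff[OF assms]] by simp
  have "f (H + K) (?A + ?B + ?C) - f (H - K) (?A - ?B + ?C)
        = (f H ?B + f K ?A) + (f H ?B + f K ?A) + (f K ?C + f K ?C)"
    by (simp add: add_left add_right diff_left diff_right algebra_simps)
  then have "(f H ?B + f K ?A) + (f H ?B + f K ?A) = 0"
    using plus minus hermitian_square[OF assms(2)] by simp
  then show ?thesis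
    by (simp only: op_double_eq_0_iff)
qed

lemma polarized_square:
  assumes "hermitian H"
  shows "f H (H ** Z + Z ** H) + f Z (H ** H) = 0"
proof (induction Z rule: hermitian_span_induct)
  case (add X Y)
  have "f H (H ** (X + Y) + (X + Y) ** H) + f (X + Y) (H ** H)
      = (f H (H ** X + X ** H) + f X (H ** H)) + (f H (H ** Y + Y ** H) + f Y (H ** H))"
    by (simp add: matrix_add_ldistrib matrix_add_rdistrib add_left add_right add_ac)
  with add show ?case
    by simp
next
  case (msmult c X)
  then show ?case
    by (simp add: matrix_msmult_left matrix_msmult_right msmult_left msmult_right
        flip: msmult_add_right)
next
  case (hermitian K)
  then show ?case
    by (rule hermitian_polarized_square[OF assms])
qed

(* Polarizing hermitian_square shows that this symmetric trilinear form vanishes. *)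
definition jordan :: "'n op \<Rightarrow> 'n op \<Rightarrow> 'n op \<Rightarrow> 'n op" where
  "jordan X Y Z = f X (Y ** Z + Z ** Y) + f Y (X ** Z + Z ** X) + f Z (X ** Y + Y ** X)"

lemma jordan_add_left: "jordan (X + X') Y Z = jordan X Y Z + jordan X' Y Z"
  by (simp add: jordan_def matrix_add_ldistrib matrix_add_rdistrib add_left add_right add_ac)

lemma jordan_msmult_left: "jordan (msmult c X) Y Z = msmult c (jordan X Y Z)"
  by (simp add: jordan_def matrix_msmult_left matrix_msmult_right msmult_left msmult_right
      flip: msmult_add_right)

lemma jordan_swap: "jordan X Y Z = jordan Y X Z"
  by (simp add: jordan_def add_ac)

lemma jordan_hermitian:
  assumes "hermitian H" "hermitian K"
  shows "jordan H K Z = 0"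
proof -
  have "jordan H K Z = (f (H + K) ((H + K) ** Z + Z ** (H + K)) + f Z ((H + K) ** (H + K)))
      - (f H (H ** Z + Z ** H) + f Z (H ** H)) - (f K (K ** Z + Z ** K) + f Z (K ** K))"
    by (simp add: jordan_def matrix_add_ldistrib matrix_add_rdistrib add_left add_right algebra_simps)
  then show ?thesis
    using polarized_square[OF hermitian_add[OF assms]] polarized_square[OF assms(1)]
      polarized_square[OF assms(2)] by simp
qed

lemma jordan_eq_0: "jordan X Y Z = 0"
proof (induction X arbitrary: Y rule: hermitian_span_induct)
  case (add X X')
  then show ?case by (simp add: jordan_add_left)
next
  case (msmult c X)
  then show ?case by (simp add: jordan_msmult_left)
next
  case (hermitian H)
  show ?case
  proof (induction Y rule: hermitian_span_induct)
    case (add Y Y')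
    then show ?case by (simp add: jordan_swap[of _ "Y + Y'"] jordan_swap[of H] jordan_add_left)
  next
    case (msmult c Y)
    then show ?case by (simp add: jordan_swap[of _ "msmult c Y"] jordan_swap[of H] jordan_msmult_left)
  next
    case (hermitian K)
    then show ?case
      using jordan_hermitian[OF \<open>hermitian H\<close>] by simp
  qed
qed

lemma antisym: "f X Y = - f Y X"
proof -
  have "(f X Y + f Y X) + (f X Y + f Y X) = jordan X (mat 1) Y"
    by (simp only: jordan_def matrix_mul_lid matrix_mul_rid identity_left add_right add_0_left add_0_right add_ac)
  then have "f X Y + f Y X = 0"
    by (simp only: jordan_eq_0 op_double_eq_0_iff)
  then show ?thesis
    by (simp add: eq_neg_iff_add_eq_0)
qed

lemma self [simp]: "f X X = 0"
  using antisym[of X X] by (simp add: vec_eq_iff)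

lemma jordan_absorb:
  assumes "P ** X + X ** P = X"
  shows "f X Z = f P (X ** Z + Z ** X) + f X (P ** Z + Z ** P)"
proof -
  have "jordan P X Z = f P (X ** Z + Z ** X) + f X (P ** Z + Z ** P) - f X Z"
    using assms antisym[of Z X] by (simp add: jordan_def add_ac)
  then show ?thesis
    using jordan_eq_0 by simp
qed

lemma component_eq_hs_inner: "f X Y $ p $ q = hs_inner (f (dagger X) (mat_unit p q)) Y"
  using adjoint[of "mat_unit p q" X Y] by simp

lemma diag_unit_commuting:
  assumes "(p = k) = (q = k)"
  shows "f (mat_unit k k) (mat_unit p q) = 0"
  using assms by (intro vanishes_on_commutant) (auto simp: hermitian_mat_unit_diag mat_unit_mult)

lemma diag_unit_component:
  assumes "(p = k) = (q = k)"
  shows "f (mat_unit k k) Y $ p $ q = 0"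
  using assms by (simp add: component_eq_hs_inner diag_unit_commuting)

lemma diag_unit_pair:
  assumes "a \<noteq> b"
  shows "f (mat_unit b b) (mat_unit a b) = - f (mat_unit a a) (mat_unit a b)"
proof -
  have "f (mat_unit a a + mat_unit b b) (mat_unit a b) = 0"
    using assms
    by (intro vanishes_on_commutant)
       (simp_all add: hermitian_add hermitian_mat_unit_diag matrix_add_ldistrib matrix_add_rdistrib mat_unit_mult)
  then show ?thesis
    by (simp add: add_left eq_neg_iff_add_eq_0 add.commute)
qed

lemma diag_unit_eq:
  assumes "a \<noteq> b"
  shows "f (mat_unit a a) (mat_unit a b) = msmult (unit_coeff f a b) (mat_unit a b)"
proof -
  have "f (mat_unit a a) (mat_unit a b) $ p $ q = 0" if pq: "(p, q) \<noteq> (a, b)" for p q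
  proof -
    consider "(p, q) = (b, a)" | "(p = a) = (q = a)" | "(p = b) = (q = b)"
      using pq assms by auto
    then show ?thesis
    proof cases
      case 1
      then show ?thesis
        using antisym[of "mat_unit a a" "mat_unit a b"] by (simp add: component_eq_hs_inner)
    next
      case 2
      then show ?thesis
        by (rule diag_unit_component)
    next
      case 3
      then show ?thesis
        using diag_unit_component[OF 3, of "mat_unit a b"] unfolding diag_unit_pair[OF assms] by simp
    qed
  qed
  then show ?thesis
    by (auto simp: vec_eq_iff unit_coeff_def)
qed

lemma off_unit_diag_left:
  "a \<noteq> b \<Longrightarrow> f (mat_unit a b) (mat_unit a a) = - msmult (unit_coeff f a b) (mat_unit a b)"
  using antisym[of "mat_unit a b"] by (simp add: diag_unit_eq)

lemma off_unit_diag_right: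
  "a \<noteq> b \<Longrightarrow> f (mat_unit a b) (mat_unit b b) = msmult (unit_coeff f a b) (mat_unit a b)"
  using antisym[of "mat_unit a b"] by (simp add: diag_unit_pair diag_unit_eq)

lemma cnj_unit_coeff: "cnj (unit_coeff f a b) = unit_coeff f a b"
  using cnj_hs_inner[of "mat_unit a b" "f (mat_unit a a) (mat_unit a b)"]
  by (simp add: unit_coeff_def component_eq_hs_inner)

lemma unit_coeff_sym:
  assumes "a \<noteq> b"
  shows "unit_coeff f a b = unit_coeff f b a"
proof -
  have "f (mat_unit a b) (mat_unit b a) $ a $ a = unit_coeff f b a"
    using assms cnj_unit_coeff[of b a] by (simp add: component_eq_hs_inner off_unit_diag_right)
  moreover have "f (mat_unit a b) (mat_unit b a) $ a $ a = unit_coeff f a b"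
    using assms cnj_unit_coeff[of a b] antisym[of "mat_unit a b" "mat_unit b a"]
    by (simp add: component_eq_hs_inner off_unit_diag_left hs_inner_minus_left)
  ultimately show ?thesis
    by simp
qed

lemma absorb_diag_unit:
  assumes "a \<noteq> b" "c = a \<or> c = b"
  shows "f (mat_unit a b) Z = f (mat_unit c c) (mat_unit a b ** Z + Z ** mat_unit a b)
           + f (mat_unit a b) (mat_unit c c ** Z + Z ** mat_unit c c)"
  using assms by (intro jordan_absorb) (auto simp: mat_unit_mult)

lemma off_unit_chain:
  assumes "a \<noteq> b" "a \<noteq> d" "b \<noteq> d"
  shows "f (mat_unit a b) (mat_unit b d) = msmult (unit_coeff f a d) (mat_unit a d)"
  using assms absorb_diag_unit[of a b a "mat_unit b d"] by (simp add: mat_unit_mult diag_unit_eq)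

lemma unit_coeff_shift:
  assumes "a \<noteq> d" "b \<noteq> d"
  shows "unit_coeff f a d = unit_coeff f b d"
proof (cases "a = b")
  case False
  have "f (mat_unit a b) (mat_unit b d) $ a $ d = hs_inner (f (mat_unit b a) (mat_unit a d)) (mat_unit b d)"
    by (simp add: component_eq_hs_inner)
  then show ?thesis
    using assms False cnj_unit_coeff[of b d] by (simp add: off_unit_chain)
qed simp

lemma unit_coeff_uniform:
  assumes "a \<noteq> b" "u \<noteq> v"
  shows "unit_coeff f a b = unit_coeff f u v"
proof (cases "u = b")
  case True
  then show ?thesis
    using assms unit_coeff_shift[of a b v] unit_coeff_sym[of v b] by simp
next
  case False
  then show ?thesis
    using assms unit_coeff_shift[of a b u] unit_coeff_sym[of u b] unit_coeff_shift[of b u v]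
      unit_coeff_sym[of v u] by (metis)
qed

lemma eq_0_if_units_eq_0:
  assumes "\<And>a b p q. f (mat_unit a b) (mat_unit p q) = 0"
  shows "f X Y = 0"
proof (induction X rule: op_induct_mat_unit)
  case (mat_unit a b)
  show ?case
    by (induction Y rule: op_induct_mat_unit) (simp_all add: add_right msmult_right assms)
qed (simp_all add: add_left msmult_left)

lemma diag_unit_eq_0_if_unit_coeff_eq_0:
  assumes coeff_0: "\<And>a b. a \<noteq> b \<Longrightarrow> unit_coeff f a b = 0"
  shows "f (mat_unit k k) Y = 0"
proof (induction Y rule: op_induct_mat_unit)
  case (mat_unit p q)
  consider "(p = k) = (q = k)" | "p = k" "q \<noteq> k" | "q = k" "p \<noteq> k"
    by blast
  then show ?case
  proof cases
    case 1
    then show ?thesis by (rule diag_unit_commuting)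
  next
    case 2
    then show ?thesis using coeff_0[of k q] by (simp add: diag_unit_eq)
  next
    case 3
    then show ?thesis using coeff_0[of p k] diag_unit_pair[of p k] by (simp add: diag_unit_eq)
  qed
qed (simp_all add: add_right msmult_right)

lemma off_unit_eq_0_if_diag_eq_0:
  assumes diag: "\<And>k Y. f (mat_unit k k) Y = 0" and ab: "a \<noteq> b" and pq: "(p, q) \<noteq> (b, a)"
  shows "f (mat_unit a b) (mat_unit p q) = 0"
proof -
  consider "(p, q) = (a, b)" | "p \<noteq> a" "q \<noteq> a" | "p \<noteq> b" "q \<noteq> b"
    using ab pq by auto
  then show ?thesis
  proof cases
    case 1
    then show ?thesis by simp
  next
    case 2
    then show ?thesis
      using ab absorb_diag_unit[of a b a "mat_unit p q"] by (simp add: diag mat_unit_mult)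
  next
    case 3
    then show ?thesis
      using ab absorb_diag_unit[of a b b "mat_unit p q"] by (simp add: diag mat_unit_mult)
  qed
qed

lemma swap_unit_eq_0_if_diag_eq_0:
  assumes diag: "\<And>k Y. f (mat_unit k k) Y = 0" and ab: "a \<noteq> b"
  shows "f (mat_unit a b) (mat_unit b a) = 0"
proof -
  have entry: "f (mat_unit a b) (mat_unit b a) $ p $ q
      = hs_inner (f (mat_unit b a) (mat_unit p q)) (mat_unit b a)" for p q
    by (simp add: component_eq_hs_inner)
  have "f (mat_unit a b) (mat_unit b a) $ b $ a = 0"
    by (simp add: entry)
  then have "hs_inner (f (mat_unit b a) (mat_unit a b)) (mat_unit b a) = 0"
    using antisym[of "mat_unit b a" "mat_unit a b"] cnj_hs_inner[of "mat_unit b a", symmetric]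
    by (simp add: hs_inner_minus_left)
  moreover have "f (mat_unit b a) (mat_unit p q) = 0" if "(p, q) \<noteq> (a, b)" for p q
    using off_unit_eq_0_if_diag_eq_0[OF diag, of b a p q] ab that by simp
  ultimately have "f (mat_unit a b) (mat_unit b a) $ p $ q = 0" for p q
    by (cases "(p, q) = (a, b)") (auto simp: entry)
  then show ?thesis
    by (simp add: vec_eq_iff)
qed

lemma eq_0_if_unit_coeff_eq_0:
  assumes "\<And>a b. a \<noteq> b \<Longrightarrow> unit_coeff f a b = 0"
  shows "f X Y = 0"
proof (rule eq_0_if_units_eq_0)
  have diag: "f (mat_unit k k) Y = 0" for k Y
    using assms by (rule diag_unit_eq_0_if_unit_coeff_eq_0)
  show "f (mat_unit a b) (mat_unit p q) = 0" for a b p q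
    using diag off_unit_eq_0_if_diag_eq_0[OF diag] swap_unit_eq_0_if_diag_eq_0[OF diag]
    by (cases "a = b"; cases "(p, q) = (b, a)") auto
qed

end

lemma commutator_like_real_commutator:
  "commutator_like (\<lambda>X Y. msmult (of_real c) (X ** Y - Y ** X))"
proof
  show "op_linear (\<lambda>X. msmult (of_real c) (X ** Y - Y ** X))" for Y
    by (simp add: op_linear_def vec_eq_iff matrix_add_ldistrib matrix_add_rdistrib
        matrix_msmult_left matrix_msmult_right algebra_simps)
  show "op_linear (\<lambda>Y. msmult (of_real c) (X ** Y - Y ** X))" for X
    by (simp add: op_linear_def vec_eq_iff matrix_add_ldistrib matrix_add_rdistrib
        matrix_msmult_left matrix_msmult_right algebra_simps)
  show "msmult (of_real c) (H ** Y - Y ** H) = 0" if "H ** Y = Y ** H" for H Y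
    using that by simp
  show "hs_inner Z (msmult (of_real c) (X ** Y - Y ** X))
      = hs_inner (msmult (of_real c) (dagger X ** Z - Z ** dagger X)) Y" for Z X Y
    unfolding hs_inner_msmult_left hs_inner_msmult_right hs_inner_diff_left hs_inner_diff_right
      hs_inner_mult_left[of Z X Y] hs_inner_mult_right[of Z Y X] by simp
qed

context commutator_like
begin

lemma diff_commutator_like:
  assumes "commutator_like g"
  shows "commutator_like (\<lambda>X Y. f X Y - g X Y)"
proof -
  interpret g: commutator_like g by fact
  show ?thesis
  proof
    show "op_linear (\<lambda>X. f X Y - g X Y)" for Y
      by (simp add: op_linear_def add_left g.add_left msmult_left g.msmult_left msmult_diff_right)
    show "op_linear (\<lambda>Y. f X Y - g X Y)" for X
      by (simp add: op_linear_def add_right g.add_right msmult_right g.msmult_right msmult_diff_right)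
    show "f H Y - g H Y = 0" if "hermitian H" "H ** Y = Y ** H" for H Y
      using that by (simp add: vanishes_on_commutant g.vanishes_on_commutant)
    show "hs_inner Z (f X Y - g X Y) = hs_inner (f (dagger X) Z - g (dagger X) Z) Y" for Z X Y
      by (simp add: hs_inner_diff_left hs_inner_diff_right adjoint g.adjoint)
  qed
qed

(* Subtracting c times the commutator leaves a map of the same kind whose unit coefficients
   all vanish. *)
theorem eq_real_multiple_of_commutator:
  "\<exists>c::real. \<forall>X Y. f X Y = msmult (of_real c) (X ** Y - Y ** X)"
proof -
  obtain c :: real where c: "\<And>a b. a \<noteq> b \<Longrightarrow> unit_coeff f a b = of_real c"
  proof (cases "\<exists>a b::'n. a \<noteq> b")
    case True
    then obtain a0 b0 :: 'n where "a0 \<noteq> b0"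
      by blast
    moreover have "of_real (Re (unit_coeff f a0 b0)) = unit_coeff f a0 b0"
      using cnj_unit_coeff[of a0 b0] by (simp add: complex_eq_iff)
    ultimately show ?thesis
      using that unit_coeff_uniform by metis
  qed blast
  interpret g: commutator_like "\<lambda>X Y. f X Y - msmult (of_real c) (X ** Y - Y ** X)"
    by (rule diff_commutator_like[OF commutator_like_real_commutator])
  have "unit_coeff (\<lambda>X Y. f X Y - msmult (of_real c) (X ** Y - Y ** X)) a b = 0" if "a \<noteq> b" for a b
    using that c[OF that] by (simp add: unit_coeff_def mat_unit_mult)
  then have "f X Y - msmult (of_real c) (X ** Y - Y ** X) = 0" for X Y
    by (rule g.eq_0_if_unit_coeff_eq_0)
  then show ?thesis
    by auto
qed

end

section \<open>The linear extension of the family\<close>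

locale selfadjoint_extension =
  fixes L :: "'n::finite op \<Rightarrow> 'n op \<Rightarrow> 'n op"
  assumes linear_state: "op_linear (\<lambda>\<rho>. L \<rho> M)"
    and linear_density: "density \<rho> \<Longrightarrow> op_linear (L \<rho>)"
    and commuting_density: "density \<rho> \<Longrightarrow> \<rho> ** M = M ** \<rho> \<Longrightarrow> L \<rho> M = \<rho> ** M"
    and selfadjoint_density: "density \<rho> \<Longrightarrow> hs_inner X (L \<rho> Y) = hs_inner (L \<rho> X) Y"
begin

lemma add_state: "L (X + X') M = L X M + L X' M"
  using linear_state by (simp add: op_linear_def)

lemma msmult_state: "L (msmult c X) M = msmult c (L X M)"
  using linear_state by (simp add: op_linear_def)

lemma linear_op: "op_linear (L X)"
proof (induction X rule: density_span_induct)
  case (add X X')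
  then show ?case
    by (simp add: op_linear_def add_state msmult_add_right add_ac)
next
  case (msmult c X)
  then show ?case
    by (simp add: op_linear_def msmult_state msmult_add_right mult.commute)
qed (rule linear_density)

lemma identity_state: "L (mat 1) M = M"
proof -
  have "L (mat 1) M = msmult (of_nat CARD('n)) (L maximally_mixed M)"
    by (subst mat1_eq_msmult_maximally_mixed) (rule msmult_state)
  also have "\<dots> = msmult (of_nat CARD('n)) maximally_mixed ** M"
    by (simp add: commuting_density[OF density_maximally_mixed maximally_mixed_commute]
        matrix_msmult_left)
  also have "\<dots> = M"
    by (simp flip: mat1_eq_msmult_maximally_mixed)
  finally show ?thesis .
qed

lemma commuting_hermitian:
  assumes "hermitian H" "H ** M = M ** H"
  shows "L H M = H ** M"
proof -
  obtain \<rho> a b where \<rho>: "density \<rho>" "a \<noteq> 0" and H: "H = msmult a \<rho> + msmult b (mat 1)"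
    using hermitian_decomposition[OF assms(1)] by blast
  have "\<rho> = msmult (1 / a) (H - msmult b (mat 1))"
    using \<rho>(2) by (simp add: H vec_eq_iff)
  then have "\<rho> ** M = M ** \<rho>"
    using assms(2)
    by (simp add: matrix_msmult_left matrix_msmult_right matrix_diff_ldistrib matrix_diff_rdistrib)
  then show ?thesis
    using \<rho>(1) by (simp add: H add_state msmult_state identity_state commuting_density
        matrix_add_rdistrib matrix_msmult_left)
qed

lemma selfadjoint: "hs_inner Z (L X Y) = hs_inner (L (dagger X) Z) Y"
proof (induction X arbitrary: Y Z rule: density_span_induct)
  case (add X X')
  then show ?case
    by (simp add: add_state dagger_add hs_inner_add_left hs_inner_add_right)
next
  case (msmult c X)
  then show ?case
    by (simp add: msmult_state dagger_msmult hs_inner_msmult_left hs_inner_msmult_right)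
next
  case (density \<rho>)
  then have "dagger \<rho> = \<rho>"
    using psd_imp_hermitian[of \<rho>] by (simp add: density_def hermitian_def)
  then show ?case
    using density by (simp add: selfadjoint_density)
qed

lemma defect_commutator_like: "commutator_like (\<lambda>X Y. L X Y - X ** Y)"
proof
  show "op_linear (\<lambda>X. L X Y - X ** Y)" for Y
    by (simp add: op_linear_def add_state msmult_state matrix_add_rdistrib matrix_msmult_left
        msmult_diff_right)
  show "op_linear (\<lambda>Y. L X Y - X ** Y)" for X
    using linear_op[of X]
    by (simp add: op_linear_def matrix_add_ldistrib matrix_msmult_right msmult_diff_right)
  show "L H Y - H ** Y = 0" if "hermitian H" "H ** Y = Y ** H" for H Y
    using that by (simp add: commuting_hermitian)
  show "hs_inner Z (L X Y - X ** Y) = hs_inner (L (dagger X) Z - dagger X ** Z) Y" for Z X Y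
    by (simp add: hs_inner_diff_left hs_inner_diff_right selfadjoint hs_inner_mult_left)
qed

end

lemma interpolation_weight_bounds:
  fixes a b :: "'n::finite"
  assumes "a \<noteq> b"
    and nonneg: "\<And>M. 0 \<le> hs_inner M (msmult (of_real \<mu>) (mat_unit a a ** M)
                                   + msmult (of_real (1 - \<mu>)) (M ** mat_unit a a))"
  shows "0 \<le> \<mu> \<and> \<mu> \<le> 1"
  using assms nonneg[of "mat_unit a b"] nonneg[of "mat_unit b a"]
  by (simp add: mat_unit_mult less_eq_complex_def)

lemma op_mult_commute_if_subsingleton:
  assumes "\<And>a b::'n::finite. a = b"
  shows "(X::'n op) ** Y = Y ** X"
proof -
  have "(X ** Y) $ i $ j = (Y ** X) $ i $ j" for i j
  proof -
    have univ: "UNIV = {i}" and "j = i"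
      using assms by auto
    then show ?thesis
      unfolding matrix_mult_component univ by (simp add: mult.commute)
  qed
  then show ?thesis
    by (simp add: vec_eq_iff)
qed

theorem proposition6:
  fixes \<Theta> :: "'n::finite op \<Rightarrow> 'n op \<Rightarrow> 'n op"
  assumes lin_each: "\<And>\<rho>. density \<rho> \<Longrightarrow> op_linear (\<Theta> \<rho>)"
    and lin_rho: "\<exists>L :: 'n op \<Rightarrow> 'n op \<Rightarrow> 'n op.
                    (\<forall>M. op_linear (\<lambda>\<rho>. L \<rho> M)) \<and> (\<forall>\<rho>. density \<rho> \<longrightarrow> L \<rho> = \<Theta> \<rho>)"
    and comm: "\<And>\<rho> M. density \<rho> \<Longrightarrow> \<rho> ** M = M ** \<rho> \<Longrightarrow> \<Theta> \<rho> M = \<rho> ** M"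
    and selfadj: "\<And>\<rho> X Y. density \<rho> \<Longrightarrow> hs_inner X (\<Theta> \<rho> Y) = hs_inner (\<Theta> \<rho> X) Y"
  shows "\<exists>\<mu>::real.
           (\<forall>\<rho> M. density \<rho> \<longrightarrow>
              \<Theta> \<rho> M = msmult (complex_of_real \<mu>) (\<rho> ** M)
                        + msmult (complex_of_real (1 - \<mu>)) (M ** \<rho>))
         \<and> ((\<forall>\<rho> M. density \<rho> \<longrightarrow> 0 \<le> hs_inner M (\<Theta> \<rho> M)) \<longrightarrow> 0 \<le> \<mu> \<and> \<mu> \<le> 1)"
proof -
  obtain L where L_linear: "\<And>M. op_linear (\<lambda>\<rho>. L \<rho> M)"
    and L_eq: "\<And>\<rho>. density \<rho> \<Longrightarrow> L \<rho> = \<Theta> \<rho>"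
    using lin_rho by blast
  interpret selfadjoint_extension L
    by unfold_locales (simp_all add: L_linear L_eq lin_each comm selfadj)
  obtain c :: real where c: "\<And>X Y. L X Y - X ** Y = msmult (of_real c) (X ** Y - Y ** X)"
    using commutator_like.eq_real_multiple_of_commutator[OF defect_commutator_like] by blast
  have \<Theta>_eq: "\<Theta> \<rho> M = msmult (of_real (1 + c)) (\<rho> ** M) + msmult (of_real (1 - (1 + c))) (M ** \<rho>)"
    if "density \<rho>" for \<rho> M
    using c[of \<rho> M] L_eq[OF that] by (simp add: vec_eq_iff algebra_simps)
  show ?thesis
  proof (cases "\<exists>a b::'n. a \<noteq> b")
    case True
    then obtain a b :: 'n where "a \<noteq> b"
      by blast
    then show ?thesis
      using \<Theta>_eq interpolation_weight_bounds[of a b "1 + c"] density_mat_unit[of a]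
      by (intro exI[of _ "1 + c"]) auto
  next
    case False
    then have "\<Theta> \<rho> M = msmult (of_real 1) (\<rho> ** M) + msmult (of_real (1 - 1)) (M ** \<rho>)"
      if "density \<rho>" for \<rho> M
      using \<Theta>_eq[OF that, of M] op_mult_commute_if_subsingleton[of M \<rho>]
      by (simp add: vec_eq_iff algebra_simps)
    then show ?thesis
      by (intro exI[of _ 1]) simp
  qed
qed

end
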